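(* Let $F$, $H$, $X$, $\Omega$, $Q$ and the sequences generated by the IneIREG method be as described in the context, with no inertia, i.e. $\alpha_k=0$ for all $k\ge0$, and suppose $H$ is $\mu$-strongly monotone for some $\mu>0$. Suppose $\eta_k\equiv\eta>0$ and $\lambda_k\in[\underline\lambda,\overline\lambda]$ for all $k\ge0$ with $0<\underline\lambda\le\overline\lambda<1/L$, $L:=L_F+\eta L_H$. Let $\beta_k:=\big(\frac{1}{1-\lambda_k^2L^2}+\frac{1}{2\lambda_k\eta\mu}\big)^{-1}$, $p_k:=\big(\prod_{i=0}^k(1-\beta_i)\big)^{-1}$ for $k\ge0$, for $k\ge1$ $\Lambda_k:=\sum_{j=0}^{k-1}\lambda_j\eta p_j$ and $\overline y_k:=\Lambda_k^{-1}\sum_{j=0}^{k-1}\lambda_j\eta p_jy_j$, and $\beta:=\big(\frac{1}{1-\overline\lambda^2L^2}+\frac{1}{2\underline\lambda\eta\mu}\big)^{-1}\in(0,1)$. Then for all $k\ge1$, $$-B_H\,\mathrm{dist}(\overline y_k,Q)\le\mathrm{Gap}(\overline y_k,H,Q)\le(1-\beta)^k\Big(\frac{D_X^2}{2\underline\lambda\eta}\Big).$$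
   Context: Work in $\mathbb{R}^n$ with Euclidean inner product $\langle\cdot,\cdot\rangle$ and norm $\|\cdot\|$. The maps $F\colon \mathrm{Dom}\,F\to\mathbb{R}^n$ and $H\colon\mathrm{Dom}\,H\to\mathbb{R}^n$ are monotone and Lipschitz continuous with constants $L_F>0$ and $L_H>0$; $H$ is $\mu$-strongly monotone means $\langle H(x)-H(y),x-y\rangle\ge\mu\|x-y\|^2$ for all $x,y\in\mathrm{Dom}\,H$. $X$ is a nonempty compact convex set and $\Omega$ a nonempty closed convex set with $X\subset\Omega\subset\mathrm{Dom}\,F\cap\mathrm{Dom}\,H$; $P_X,P_\Omega$ denote orthogonal projections. $Q:=\{x\in X:\langle F(x),y-x\rangle\ge0\ \forall y\in X\}$ is assumed nonempty. $D_X:=\sup_{x,y\in X}\|x-y\|$, $B_H:=\sup_{x\in Q}\|H(x)\|$, $\mathrm{dist}(y,Q)$ is the Euclidean distance to $Q$. $\mathrm{Gap}(z,H,Q):=\sup_{x\in Q}\langle H(x),z-x\rangle$. IneIREG method: start with $x_0=x_{-1}\in X$; for $k=0,1,\dots$, with parameters $\alpha_k\ge0$, $\lambda_k>0$, $\eta_k>0$, set $w_k=x_k+\alpha_k(x_k-x_{k-1})$, $w'_k=P_\Omega(w_k)$, $y_k=P_X\big(w_k-\lambda_k(F(w'_k)+\eta_kH(w'_k))\big)$, $x_{k+1}=P_X\big(w_k-\lambda_k(F(y_k)+\eta_kH(y_k))\big)$. *)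

theory Defs
  imports "HOL-Analysis.Analysis"
begin

definition monotone_op :: "('a::real_inner \<Rightarrow> 'a) \<Rightarrow> 'a set \<Rightarrow> bool" where
  "monotone_op T D \<longleftrightarrow> (\<forall>x\<in>D. \<forall>y\<in>D. inner (T x - T y) (x - y) \<ge> 0)"

definition strongly_monotone_op :: "real \<Rightarrow> ('a::real_inner \<Rightarrow> 'a) \<Rightarrow> 'a set \<Rightarrow> bool" where
  "strongly_monotone_op \<mu> T D \<longleftrightarrow>
     (\<forall>x\<in>D. \<forall>y\<in>D. inner (T x - T y) (x - y) \<ge> \<mu> * (norm (x - y))\<^sup>2)"

definition VI_sol :: "('a::real_inner \<Rightarrow> 'a) \<Rightarrow> 'a set \<Rightarrow> 'a set" where
  "VI_sol F X = {x \<in> X. \<forall>y\<in>X. inner (F x) (y - x) \<ge> 0}"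

definition gap_fn :: "'a::real_inner \<Rightarrow> ('a \<Rightarrow> 'a) \<Rightarrow> 'a set \<Rightarrow> real" where
  "gap_fn z H Q = (SUP x\<in>Q. inner (H x) (z - x))"

end

theory Submission
  imports Defs
begin

text \<open>Without inertia every step is an extragradient step for the regularized operator
  G = F + eta H, which is L-Lipschitz. For q in Q the two projection inequalities give
  |x(k+1) - q|^2 <= |x k - q|^2 - (1 - lam^2 L^2) |x k - y k|^2 + 2 lam <G (y k), q - y k>;
  monotonicity of F together with q in Q, and strong monotonicity of H, bound the last term
  by -2 lam eta <H q, y k - q> - 2 lam eta mu |y k - q|^2, and the two squared distances
  together dominate beta k |x k - q|^2. Scaling by p k and telescoping yields
  2 Lambda k <H q, ybar k - q> <= |x 0 - q|^2 <= D_X^2, while Lambda k grows at least like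
  (1 - beta)^(-k). The lower bound on the gap is Cauchy-Schwarz.\<close>

lemma monotone_op_subset: "monotone_op T D \<Longrightarrow> E \<subseteq> D \<Longrightarrow> monotone_op T E"
  unfolding monotone_op_def by blast

lemma strongly_monotone_op_subset:
  "strongly_monotone_op \<mu> T D \<Longrightarrow> E \<subseteq> D \<Longrightarrow> strongly_monotone_op \<mu> T E"
  unfolding strongly_monotone_op_def by blast

lemma extragradient_projection_estimate:
  fixes x y x' z g g' :: "'a::real_inner"
  assumes proj_y: "inner (x - l *\<^sub>R g - y) (x' - y) \<le> 0"
    and proj_x': "inner (x - l *\<^sub>R g' - x') (z - x') \<le> 0"
    and lip: "norm (g - g') \<le> L * norm (x - y)"
    and l: "0 \<le> l" and L: "0 \<le> L"
  shows "(norm (x' - z))\<^sup>2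
    \<le> (norm (x - z))\<^sup>2 - (1 - l\<^sup>2 * L\<^sup>2) * (norm (x - y))\<^sup>2 + 2 * l * inner g' (z - y)"
proof -
  define u v w where "u = x - y" and "v = x' - y" and "w = z - y"
  have uvw: "x - z = u - w" "x' - z = v - w" "x - y = u"
    "x - l *\<^sub>R g - y = u - l *\<^sub>R g" "x - l *\<^sub>R g' - x' = (u - v) - l *\<^sub>R g'" "z - x' = w - v"
    by (simp_all add: u_def v_def w_def algebra_simps)
  have q1: "inner u v - l * inner g v \<le> 0"
    using proj_y unfolding uvw by (simp add: v_def inner_diff_left)
  have q2: "inner u w - inner u v - inner v w + inner v v - l * inner g' w + l * inner g' v \<le> 0"
    using proj_x' unfolding uvw by (simp add: inner_diff_left inner_diff_right inner_commute algebra_simps)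
  have "l * inner (g - g') v \<le> l * (L * norm u * norm v)"
  proof (rule mult_left_mono[OF _ l])
    have "inner (g - g') v \<le> norm (g - g') * norm v" by (rule norm_cauchy_schwarz)
    also have "\<dots> \<le> L * norm u * norm v" using lip by (simp add: uvw mult_right_mono)
    finally show "inner (g - g') v \<le> L * norm u * norm v" .
  qed
  moreover have "2 * l * (L * norm u * norm v) \<le> l\<^sup>2 * L\<^sup>2 * (norm u)\<^sup>2 + (norm v)\<^sup>2"
    using sum_squares_ge_zero[of "l * L * norm u - norm v" 0]
    by (simp add: power2_eq_square algebra_simps)
  ultimately have "(norm (v - w))\<^sup>2 \<le> (norm (u - w))\<^sup>2 - (1 - l\<^sup>2 * L\<^sup>2) * (norm u)\<^sup>2 + 2 * l * inner g' w"
    using q1 q2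
    by (simp add: power2_norm_eq_inner inner_diff_left inner_diff_right inner_commute algebra_simps)
  then show ?thesis by (simp add: uvw w_def)
qed

lemma inverse_sum_inverse_mult_square_le:
  fixes a b n s t :: real
  assumes a: "0 < a" and b: "0 < b" and n: "0 \<le> n" and nst: "n \<le> s + t"
  shows "1 / (1 / a + 1 / b) * n\<^sup>2 \<le> a * s\<^sup>2 + b * t\<^sup>2"
proof -
  have "n\<^sup>2 \<le> (s + t)\<^sup>2" using n nst by (simp add: power_mono)
  moreover have "1 / (1 / a + 1 / b) = a * b / (a + b)" using a b by (simp add: field_simps)
  ultimately have "1 / (1 / a + 1 / b) * n\<^sup>2 \<le> a * b / (a + b) * (s + t)\<^sup>2"
    using a b by (simp add: mult_left_mono divide_right_mono)
  also have "\<dots> \<le> a * s\<^sup>2 + b * t\<^sup>2"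
  proof -
    have "(a + b) * (a * s\<^sup>2 + b * t\<^sup>2) - a * b * (s + t)\<^sup>2 = (a * s - b * t)\<^sup>2"
      by (simp add: power2_eq_square algebra_simps)
    then have "a * b * (s + t)\<^sup>2 \<le> (a * s\<^sup>2 + b * t\<^sup>2) * (a + b)"
      by (smt (verit) mult.commute zero_le_power2)
    then show ?thesis using a b by (simp add: pos_divide_le_eq)
  qed
  finally show ?thesis .
qed

lemma inverse_sum_inverse_bounds:
  fixes a b :: real
  assumes "0 < a" "a \<le> 1" "0 < b"
  shows "0 < 1 / (1 / a + 1 / b)" "1 / (1 / a + 1 / b) < 1"
proof -
  have "1 \<le> 1 / a" "0 < 1 / b" using assms by simp_all
  then have "1 < 1 / a + 1 / b" by linarith
  then show "0 < 1 / (1 / a + 1 / b)" "1 / (1 / a + 1 / b) < 1" by simp_all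
qed

lemma inverse_sum_inverse_mono:
  fixes a b a' b' :: real
  assumes "0 < a" "0 < b" "a \<le> a'" "b \<le> b'"
  shows "1 / (1 / a + 1 / b) \<le> 1 / (1 / a' + 1 / b')"
  using assms by (intro divide_left_mono add_mono frac_le add_pos_pos mult_pos_pos) auto

lemma sum_scaled_decrease_le:
  fixes d b c :: "nat \<Rightarrow> real"
  assumes b: "\<And>k. b k < 1"
    and step: "\<And>k. d (Suc k) \<le> (1 - b k) * d k - c k"
  shows "(\<Sum>j<k. c j / (\<Prod>i\<le>j. 1 - b i)) \<le> d 0 - d k / (\<Prod>i<k. 1 - b i)"
proof (induction k)
  case 0
  then show ?case by simp
next
  case (Suc k)
  define P where "P = (\<Prod>i<k. 1 - b i)"
  have P_pos: "0 < P" using b by (simp add: P_def prod_pos)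
  have P_Suc: "(\<Prod>i\<le>k. 1 - b i) = P * (1 - b k)" "(\<Prod>i<Suc k. 1 - b i) = P * (1 - b k)"
    by (simp_all add: P_def lessThan_Suc_atMost[symmetric])
  have "d (Suc k) / (P * (1 - b k)) \<le> ((1 - b k) * d k - c k) / (P * (1 - b k))"
    using step[of k] P_pos b[of k] by (simp add: divide_right_mono)
  also have "\<dots> = d k / P - c k / (P * (1 - b k))"
    using P_pos b[of k] by (simp add: field_simps)
  finally show ?case using Suc.IH by (simp add: P_Suc P_def[symmetric])
qed

lemma gap_fn_le:
  assumes "Q \<noteq> {}" and "\<And>q. q \<in> Q \<Longrightarrow> inner (H q) (z - q) \<le> c"
  shows "gap_fn z H Q \<le> c"
  unfolding gap_fn_def using assms by (intro cSUP_least) auto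

lemma gap_fn_ge_neg_infdist:
  fixes H :: "'a::real_inner \<Rightarrow> 'a"
  assumes Q_ne: "Q \<noteq> {}" and H_bdd: "bounded (H ` Q)"
    and gap_bdd: "bdd_above ((\<lambda>q. inner (H q) (z - q)) ` Q)"
  shows "- (SUP q\<in>Q. norm (H q)) * infdist z Q \<le> gap_fn z H Q"
proof -
  define B where "B = (SUP q\<in>Q. norm (H q))"
  obtain M where "\<And>q. q \<in> Q \<Longrightarrow> norm (H q) \<le> M" using H_bdd by (auto simp: bounded_iff)
  then have "bdd_above ((\<lambda>q. norm (H q)) ` Q)" by (rule bdd_aboveI2)
  then have norm_le_B: "norm (H q) \<le> B" if "q \<in> Q" for q
    unfolding B_def using that by (rule cSUP_upper2) simp
  have B_nonneg: "0 \<le> B" using Q_ne norm_le_B by (meson ex_in_conv norm_ge_zero order_trans)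
  have dist_le: "- B * dist z q \<le> gap_fn z H Q" if q: "q \<in> Q" for q
  proof -
    have "- B * dist z q \<le> - norm (H q) * norm (z - q)"
      using norm_le_B[OF q] by (simp add: dist_norm mult_right_mono)
    also have "\<dots> \<le> inner (H q) (z - q)"
      using norm_cauchy_schwarz[of "- H q" "z - q"] by simp
    also have "\<dots> \<le> gap_fn z H Q"
      unfolding gap_fn_def using gap_bdd q by (rule cSUP_upper2) simp
    finally show ?thesis .
  qed
  show ?thesis
  proof (cases "B = 0")
    case True
    then show ?thesis using dist_le Q_ne by (auto simp: B_def)
  next
    case False
    then have B_pos: "0 < B" using B_nonneg by simp
    have "- gap_fn z H Q / B \<le> infdist z Q"
      unfolding infdist_notempty[OF Q_ne]
    proof (rule cINF_greatest[OF Q_ne])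
      fix q assume "q \<in> Q"
      then have "- dist z q * B \<le> gap_fn z H Q" using dist_le by (simp add: mult.commute)
      then have "- dist z q \<le> gap_fn z H Q / B" using B_pos by (simp add: pos_le_divide_eq)
      then show "- gap_fn z H Q / B \<le> dist z q" by simp
    qed
    then have "- infdist z Q \<le> gap_fn z H Q / B" by simp
    then have "- infdist z Q * B \<le> gap_fn z H Q" using B_pos by (simp add: pos_le_divide_eq)
    then show ?thesis by (simp add: B_def[symmetric] mult.commute)
  qed
qed

locale regularized_extragradient =
  fixes F H :: "'a::euclidean_space \<Rightarrow> 'a" and X :: "'a set"
    and L \<mu> \<eta> lamlo lamhi :: real and lam :: "nat \<Rightarrow> real" and x y :: "nat \<Rightarrow> 'a"
  assumes X_compact: "compact X" and X_convex: "convex X"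
    and F_mono: "monotone_op F X" and H_strong: "strongly_monotone_op \<mu> H X"
    and G_lip: "L-lipschitz_on X (\<lambda>z. F z + \<eta> *\<^sub>R H z)"
    and mu_pos: "0 < \<mu>" and eta_pos: "0 < \<eta>"
    and lamlo_pos: "0 < lamlo" and lam_bounds: "\<And>k. lamlo \<le> lam k \<and> lam k \<le> lamhi"
    and lamhi_L: "lamhi * L < 1"
    and x0: "x 0 \<in> X"
    and y_eq: "\<And>k. y k = closest_point X (x k - lam k *\<^sub>R (F (x k) + \<eta> *\<^sub>R H (x k)))"
    and x_Suc: "\<And>k. x (Suc k) = closest_point X (x k - lam k *\<^sub>R (F (y k) + \<eta> *\<^sub>R H (y k)))"
begin

text \<open>The step-dependent rate is \<open>rate (lam k) (lam k)\<close>; the uniform rate of the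
  corollary is \<open>rate lamhi lamlo\<close>, the worst case in each slot.\<close>
definition rate :: "real \<Rightarrow> real \<Rightarrow> real" where
  "rate a b = 1 / (1 / (1 - a\<^sup>2 * L\<^sup>2) + 1 / (2 * b * \<eta> * \<mu>))"

definition growth :: "nat \<Rightarrow> real" where
  "growth k = 1 / (\<Prod>i\<in>{0..k}. 1 - rate (lam i) (lam i))"

definition total_weight :: "nat \<Rightarrow> real" where
  "total_weight k = (\<Sum>j<k. lam j * \<eta> * growth j)"

definition ergodic_mean :: "nat \<Rightarrow> 'a" where
  "ergodic_mean k = (1 / total_weight k) *\<^sub>R (\<Sum>j<k. (lam j * \<eta> * growth j) *\<^sub>R y j)"

lemma L_nonneg: "0 \<le> L"
  using G_lip lipschitz_on_nonneg by blast

lemma lam_pos: "0 < lam k"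
  using lamlo_pos lam_bounds[of k] by linarith

lemma lam_L_lt_1: "lam k * L < 1"
  using lam_bounds[of k] L_nonneg lamhi_L by (smt (verit) mult_right_mono)

lemma one_minus_square_pos:
  assumes "0 < a" "a * L < 1"
  shows "0 < 1 - a\<^sup>2 * L\<^sup>2"
proof -
  have "(a * L)\<^sup>2 < 1" using assms L_nonneg by (simp add: abs_square_less_1)
  then show ?thesis by (simp add: power_mult_distrib)
qed

lemma rate_bounds:
  assumes "0 < a" "a * L < 1" "0 < b"
  shows "0 < rate a b" "rate a b < 1"
proof -
  have "0 < 1 - a\<^sup>2 * L\<^sup>2" "1 - a\<^sup>2 * L\<^sup>2 \<le> 1"
    using one_minus_square_pos[OF assms(1,2)] by simp_all
  moreover have "0 < 2 * b * \<eta> * \<mu>" using assms eta_pos mu_pos by simp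
  ultimately show "0 < rate a b" "rate a b < 1"
    unfolding rate_def by (rule inverse_sum_inverse_bounds)+
qed

lemma uniform_rate_bounds: "0 < rate lamhi lamlo" "rate lamhi lamlo < 1"
  using lamlo_pos lam_bounds[of 0] lamhi_L by (intro rate_bounds; linarith)+

lemma step_rate_bounds: "0 < rate (lam k) (lam k)" "rate (lam k) (lam k) < 1"
  using rate_bounds[OF lam_pos lam_L_lt_1 lam_pos] by simp_all

lemma uniform_rate_le: "rate lamhi lamlo \<le> rate (lam k) (lam k)"
  unfolding rate_def
proof (rule inverse_sum_inverse_mono)
  have "0 < lamhi" using lamlo_pos lam_bounds[of 0] by linarith
  then show "0 < 1 - lamhi\<^sup>2 * L\<^sup>2" using one_minus_square_pos lamhi_L by blast
  show "0 < 2 * lamlo * \<eta> * \<mu>" using lamlo_pos eta_pos mu_pos by simp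
  have "(lam k)\<^sup>2 \<le> lamhi\<^sup>2" using lam_bounds[of k] lam_pos[of k] by (intro power_mono) auto
  then show "1 - lamhi\<^sup>2 * L\<^sup>2 \<le> 1 - (lam k)\<^sup>2 * L\<^sup>2" by (simp add: mult_right_mono)
  show "2 * lamlo * \<eta> * \<mu> \<le> 2 * lam k * \<eta> * \<mu>" using lam_bounds eta_pos mu_pos by simp
qed

lemma X_closed: "closed X"
  using X_compact compact_imp_closed by blast

lemma x_in: "x k \<in> X"
  by (induction k) (use x0 x_Suc closest_point_in_set[OF X_closed] in auto)

lemma y_in: "y k \<in> X"
  using y_eq closest_point_in_set[OF X_closed] x0 by auto

lemma dist_solution_step:
  assumes q: "q \<in> VI_sol F X"
  shows "(norm (x (Suc k) - q))\<^sup>2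
    \<le> (1 - rate (lam k) (lam k)) * (norm (x k - q))\<^sup>2 - 2 * lam k * \<eta> * inner (H q) (y k - q)"
proof -
  define G where "G z = F z + \<eta> *\<^sub>R H z" for z
  have qX: "q \<in> X" and Fq: "inner (F q) (y k - q) \<ge> 0"
    using q y_in by (auto simp: VI_sol_def)
  have "(norm (x (Suc k) - q))\<^sup>2 \<le> (norm (x k - q))\<^sup>2 - (1 - (lam k)\<^sup>2 * L\<^sup>2) * (norm (x k - y k))\<^sup>2
      + 2 * lam k * inner (G (y k)) (q - y k)"
  proof (rule extragradient_projection_estimate)
    show "inner (x k - lam k *\<^sub>R G (x k) - y k) (x (Suc k) - y k) \<le> 0"
      using closest_point_dot[OF X_convex X_closed x_in] y_eq by (simp add: G_def)
    show "inner (x k - lam k *\<^sub>R G (y k) - x (Suc k)) (q - x (Suc k)) \<le> 0"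
      using closest_point_dot[OF X_convex X_closed qX] x_Suc by (simp add: G_def)
    show "norm (G (x k) - G (y k)) \<le> L * norm (x k - y k)"
      using lipschitz_onD[OF G_lip x_in y_in] by (simp add: G_def dist_norm)
  qed (use lam_pos L_nonneg in \<open>auto intro: less_imp_le\<close>)
  moreover have "2 * lam k * inner (G (y k)) (q - y k)
      \<le> 2 * lam k * (- \<eta> * inner (H q) (y k - q) - \<eta> * \<mu> * (norm (y k - q))\<^sup>2)"
  proof (rule mult_left_mono)
    have "inner (F (y k) - F q) (y k - q) \<ge> 0"
      using F_mono y_in qX unfolding monotone_op_def by blast
    moreover have "inner (H (y k) - H q) (y k - q) \<ge> \<mu> * (norm (y k - q))\<^sup>2"
      using H_strong y_in qX unfolding strongly_monotone_op_def by blast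
    ultimately show "inner (G (y k)) (q - y k)
        \<le> - \<eta> * inner (H q) (y k - q) - \<eta> * \<mu> * (norm (y k - q))\<^sup>2"
      using Fq eta_pos mult_left_mono[of "\<mu> * (norm (y k - q))\<^sup>2" "inner (H (y k) - H q) (y k - q)" \<eta>]
      by (simp add: G_def inner_add_left inner_diff_left inner_diff_right algebra_simps)
  qed (use lam_pos in \<open>simp add: less_imp_le\<close>)
  moreover have "rate (lam k) (lam k) * (norm (x k - q))\<^sup>2
      \<le> (1 - (lam k)\<^sup>2 * L\<^sup>2) * (norm (x k - y k))\<^sup>2 + (2 * lam k * \<eta> * \<mu>) * (norm (y k - q))\<^sup>2"
    unfolding rate_def
  proof (rule inverse_sum_inverse_mult_square_le)
    show "0 < 1 - (lam k)\<^sup>2 * L\<^sup>2" using one_minus_square_pos[OF lam_pos lam_L_lt_1] .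
    show "0 < 2 * lam k * \<eta> * \<mu>" using lam_pos eta_pos mu_pos by simp
  qed (use norm_triangle_ineq[of "x k - y k" "y k - q"] in simp_all)
  ultimately show ?thesis by (simp add: algebra_simps)
qed

lemma weighted_inner_sum_le:
  assumes q: "q \<in> VI_sol F X"
  shows "2 * (\<Sum>j<k. (lam j * \<eta> * growth j) * inner (H q) (y j - q)) \<le> (norm (x 0 - q))\<^sup>2"
proof -
  define P where "P k = (\<Prod>i<k. 1 - rate (lam i) (lam i))" for k
  have "(\<Sum>j<k. 2 * lam j * \<eta> * inner (H q) (y j - q) / (\<Prod>i\<le>j. 1 - rate (lam i) (lam i)))
      \<le> (norm (x 0 - q))\<^sup>2 - (norm (x k - q))\<^sup>2 / P k"
    unfolding P_def
    by (rule sum_scaled_decrease_le) (use step_rate_bounds dist_solution_step[OF q] in auto)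
  moreover have "0 \<le> (norm (x k - q))\<^sup>2 / P k"
    using step_rate_bounds by (simp add: P_def prod_pos less_imp_le)
  moreover have "(\<Sum>j<k. 2 * lam j * \<eta> * inner (H q) (y j - q) / (\<Prod>i\<le>j. 1 - rate (lam i) (lam i)))
      = 2 * (\<Sum>j<k. (lam j * \<eta> * growth j) * inner (H q) (y j - q))"
    unfolding sum_distrib_left by (intro sum.cong refl) (simp add: growth_def atLeast0AtMost)
  ultimately show ?thesis by linarith
qed

lemma growth_ge: "1 / (1 - rate lamhi lamlo) ^ Suc k \<le> growth k"
proof -
  have "(\<Prod>i\<in>{0..k}. 1 - rate (lam i) (lam i)) \<le> (\<Prod>i\<in>{0..k}. 1 - rate lamhi lamlo)"
    using step_rate_bounds uniform_rate_le by (intro prod_mono) (auto simp: less_imp_le)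
  moreover have "0 < (\<Prod>i\<in>{0..k}. 1 - rate (lam i) (lam i))"
    using step_rate_bounds by (simp add: prod_pos)
  ultimately show ?thesis by (simp add: growth_def frac_le)
qed

lemma total_weight_ge:
  assumes "1 \<le> k"
  shows "lamlo * \<eta> / (1 - rate lamhi lamlo) ^ k \<le> total_weight k"
proof -
  obtain m where k: "k = Suc m" using assms by (cases k) auto
  have growth_pos: "0 < growth j" for j
    using step_rate_bounds by (simp add: growth_def prod_pos)
  have "lamlo * \<eta> / (1 - rate lamhi lamlo) ^ k = (lamlo * \<eta>) * (1 / (1 - rate lamhi lamlo) ^ Suc m)"
    by (simp add: k)
  also have "\<dots> \<le> (lam m * \<eta>) * growth m"
    using growth_ge[of m] lam_bounds[of m] lamlo_pos eta_pos growth_pos[of m] uniform_rate_bounds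
    by (intro mult_mono) auto
  also have "\<dots> \<le> total_weight k"
    unfolding total_weight_def k
    by (rule member_le_sum) (use lam_pos eta_pos growth_pos in \<open>auto intro: less_imp_le\<close>)
  finally show ?thesis .
qed

lemma inner_ergodic_mean_le:
  assumes k: "1 \<le> k" and q: "q \<in> VI_sol F X"
  shows "inner (H q) (ergodic_mean k - q)
    \<le> (1 - rate lamhi lamlo) ^ k * ((diameter X)\<^sup>2 / (2 * lamlo * \<eta>))"
proof -
  define c where "c = lamlo * \<eta> / (1 - rate lamhi lamlo) ^ k"
  have c_pos: "0 < c" using lamlo_pos eta_pos uniform_rate_bounds by (simp add: c_def)
  have c_le: "c \<le> total_weight k" using total_weight_ge[OF k] by (simp add: c_def)
  have "total_weight k *\<^sub>R (ergodic_mean k - q) = (\<Sum>j<k. (lam j * \<eta> * growth j) *\<^sub>R (y j - q))"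
    using c_pos c_le
    by (simp add: ergodic_mean_def total_weight_def scaleR_diff_right sum_subtractf scaleR_sum_left)
  then have "total_weight k * inner (H q) (ergodic_mean k - q)
      = (\<Sum>j<k. (lam j * \<eta> * growth j) * inner (H q) (y j - q))"
    by (metis (no_types, lifting) inner_scaleR_right inner_sum_right sum.cong)
  then have "2 * total_weight k * inner (H q) (ergodic_mean k - q) \<le> (norm (x 0 - q))\<^sup>2"
    using weighted_inner_sum_le[OF q] by (simp add: mult.assoc)
  also have "\<dots> \<le> (diameter X)\<^sup>2"
    using q diameter_bounded_bound[OF compact_imp_bounded[OF X_compact] x0]
    by (intro power_mono) (auto simp: VI_sol_def dist_norm)
  finally have "inner (H q) (ergodic_mean k - q) \<le> (diameter X)\<^sup>2 / (2 * total_weight k)"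
    using c_pos c_le by (simp add: pos_le_divide_eq mult.commute mult.left_commute)
  also have "\<dots> \<le> (diameter X)\<^sup>2 / (2 * c)"
    using c_pos c_le by (intro divide_left_mono) auto
  also have "\<dots> = (1 - rate lamhi lamlo) ^ k * ((diameter X)\<^sup>2 / (2 * lamlo * \<eta>))"
    using uniform_rate_bounds by (simp add: c_def mult.commute mult.assoc)
  finally show ?thesis .
qed

end

theorem corollary4p11:
  fixes F H :: "'a::euclidean_space \<Rightarrow> 'a"
    and DF DH X \<Omega> :: "'a set"
    and LF LH \<mu> \<eta> lamlo lamhi :: real
    and \<alpha> lam :: "nat \<Rightarrow> real"
    and x y :: "nat \<Rightarrow> 'a"
  assumes LF_pos: "LF > 0" and LH_pos: "LH > 0"
    and F_mono: "monotone_op F DF" and H_mono: "monotone_op H DH"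
    and F_lip: "LF-lipschitz_on DF F" and H_lip: "LH-lipschitz_on DH H"
    and mu_pos: "\<mu> > 0" and H_strong: "strongly_monotone_op \<mu> H DH"
    and X_ne: "X \<noteq> {}" and X_compact: "compact X" and X_convex: "convex X"
    and Om_ne: "\<Omega> \<noteq> {}" and Om_closed: "closed \<Omega>" and Om_convex: "convex \<Omega>"
    and X_sub: "X \<subseteq> \<Omega>" and Om_sub: "\<Omega> \<subseteq> DF \<inter> DH"
    and Q_ne: "VI_sol F X \<noteq> {}"
    and alpha0: "\<forall>k. \<alpha> k = 0"
    and eta_pos: "\<eta> > 0"
    and lam_lo: "0 < lamlo" and lam_order: "lamlo \<le> lamhi"
    and lam_hi: "lamhi < 1 / (LF + \<eta> * LH)"
    and lam_range: "\<forall>k. lamlo \<le> lam k \<and> lam k \<le> lamhi"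
    and x0: "x 0 \<in> X"
    and y_def: "\<forall>k. y k = closest_point X
        ((x k + \<alpha> k *\<^sub>R (x k - x (k - 1)))
          - lam k *\<^sub>R (F (closest_point \<Omega> (x k + \<alpha> k *\<^sub>R (x k - x (k - 1))))
             + \<eta> *\<^sub>R H (closest_point \<Omega> (x k + \<alpha> k *\<^sub>R (x k - x (k - 1))))))"
    and x_def: "\<forall>k. x (Suc k) = closest_point X
        ((x k + \<alpha> k *\<^sub>R (x k - x (k - 1)))
          - lam k *\<^sub>R (F (y k) + \<eta> *\<^sub>R H (y k)))"
  shows "let L = LF + \<eta> * LH;
             Q = VI_sol F X;
             betak = (\<lambda>k. 1 / (1 / (1 - (lam k)\<^sup>2 * L\<^sup>2) + 1 / (2 * lam k * \<eta> * \<mu>)));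
             p = (\<lambda>k. 1 / (\<Prod>i\<in>{0..k}. (1 - betak i)));
             \<Lambda> = (\<lambda>k. \<Sum>j<k. lam j * \<eta> * p j);
             ybar = (\<lambda>k. (1 / \<Lambda> k) *\<^sub>R (\<Sum>j<k. (lam j * \<eta> * p j) *\<^sub>R y j));
             \<beta> = 1 / (1 / (1 - lamhi\<^sup>2 * L\<^sup>2) + 1 / (2 * lamlo * \<eta> * \<mu>));
             BH = (SUP q\<in>Q. norm (H q));
             DX = diameter X
         in 0 < \<beta> \<and> \<beta> < 1 \<and>
            (\<forall>k\<ge>1. - BH * infdist (ybar k) Q \<le> gap_fn (ybar k) H Q
                   \<and> gap_fn (ybar k) H Q \<le> (1 - \<beta>) ^ k * (DX\<^sup>2 / (2 * lamlo * \<eta>)))"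
proof -
  have X_closed: "closed X" using X_compact compact_imp_closed by blast
  have x_in: "x k \<in> X" for k
    by (induction k) (use x0 x_def closest_point_in_set[OF X_closed X_ne] in auto)
  have "closest_point \<Omega> (x k) = x k" for k using x_in X_sub closest_point_self by blast
  then have y_eq: "y k = closest_point X (x k - lam k *\<^sub>R (F (x k) + \<eta> *\<^sub>R H (x k)))" for k
    using y_def alpha0 by simp
  have G_lip: "(LF + \<eta> * LH)-lipschitz_on X (\<lambda>z. F z + \<eta> *\<^sub>R H z)"
    using X_sub Om_sub eta_pos
    by (intro lipschitz_on_add lipschitz_on_cmult_nonneg lipschitz_on_subset[OF F_lip]
        lipschitz_on_subset[OF H_lip]) auto
  interpret R: regularized_extragradient F H X "LF + \<eta> * LH" \<mu> \<eta> lamlo lamhi lam x y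
  proof
    show "monotone_op F X" "strongly_monotone_op \<mu> H X"
      using monotone_op_subset[OF F_mono] strongly_monotone_op_subset[OF H_strong] X_sub Om_sub
      by auto
    show "lamhi * (LF + \<eta> * LH) < 1"
      using lam_hi LF_pos LH_pos eta_pos by (simp add: pos_less_divide_eq add_pos_pos)
  qed (use X_compact X_convex G_lip mu_pos eta_pos lam_lo lam_range x0 y_eq x_def alpha0 in auto)
  have "bounded (H ` X)"
    using X_compact lipschitz_on_continuous_on[OF lipschitz_on_subset[OF H_lip]] X_sub Om_sub
    by (intro compact_imp_bounded compact_continuous_image) auto
  then have H_bdd: "bounded (H ` VI_sol F X)"
    by (rule bounded_subset) (auto simp: VI_sol_def)
  show ?thesis
    unfolding Let_def R.rate_def[symmetric] R.growth_def[symmetric]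
      R.total_weight_def[symmetric] R.ergodic_mean_def[symmetric]
  proof (intro conjI allI impI R.uniform_rate_bounds)
    fix k :: nat assume "1 \<le> k"
    note bound = R.inner_ergodic_mean_le[OF this]
    show "gap_fn (R.ergodic_mean k) H (VI_sol F X)
        \<le> (1 - R.rate lamhi lamlo) ^ k * ((diameter X)\<^sup>2 / (2 * lamlo * \<eta>))"
      using Q_ne bound by (rule gap_fn_le)
    show "- (SUP q\<in>VI_sol F X. norm (H q)) * infdist (R.ergodic_mean k) (VI_sol F X)
        \<le> gap_fn (R.ergodic_mean k) H (VI_sol F X)"
      using Q_ne H_bdd bdd_aboveI2[OF bound] by (rule gap_fn_ge_neg_infdist)
  qed
qed

end
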